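(* Let $\mathcal{G}$ be an ergodic $d$-regular Borel pmp graph on a standard probability space $(X,\mu)$, and assume $\mathcal{G}$ has no odd cycles. If $\mathcal{G}$ satisfies the strict measurable Tutte condition, then $\mathcal{G}$ is strictly expanding for independent sets.
   Context: A Borel graph on $X$ is a simple undirected graph with Borel edge set; $d$-regular means all degrees are $d$ (up to null sets). pmp: every partial Borel bijection of $X$ whose graph is contained in the connectedness relation preserves $\mu$. Ergodic: every measurable union of connected components has measure $0$ or $1$. For $A\subseteq X$, $\mathcal{N}(A)$ is the set of vertices having a neighbor in $A$. For measurable $A$, $\mathcal{O}_A$ is the set of $x\in X\setminus A$ lying in a finite connected component of odd size of $\mathcal{G}\restriction(X\setminus A)$, $\mathcal{O}_A^{(2k+1)}$ those in such a component of size $2k+1$, and $\nu_A(Y)=\sum_{k\ge0}\frac{1}{2k+1}\mu(Y\cap\mathcal{O}_A^{(2k+1)})$. Strict measurable Tutte condition: there is $c<1$ with $\nu_A(\mathcal{O}_A)\le c\,\mu(A)$ for all measurable $A$. Strictly expanding for independent sets: there is $c>1$ with $\mu(\mathcal{N}(A))\ge c\,\mu(A)$ for every measurable set $A$ containing no two adjacent vertices. *)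

theory Defs
  imports "HOL-Probability.Probability"
begin

definition borel_graph :: "'a::polish_space measure \<Rightarrow> ('a \<Rightarrow> 'a \<Rightarrow> bool) \<Rightarrow> bool" where
  "borel_graph M E \<longleftrightarrow>
     (\<forall>x y. E x y \<longrightarrow> E y x) \<and> (\<forall>x. \<not> E x x) \<and>
     {p. E (fst p) (snd p)} \<in> sets (M \<Otimes>\<^sub>M M)"

definition d_regular :: "'a measure \<Rightarrow> ('a \<Rightarrow> 'a \<Rightarrow> bool) \<Rightarrow> nat \<Rightarrow> bool" where
  "d_regular M E d \<longleftrightarrow> (AE x in M. finite {y. E x y} \<and> card {y. E x y} = d)"

definition connected_rel :: "('a \<Rightarrow> 'a \<Rightarrow> bool) \<Rightarrow> 'a \<Rightarrow> 'a \<Rightarrow> bool" where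
  "connected_rel E = E\<^sup>*\<^sup>*"

definition pmp_graph :: "'a measure \<Rightarrow> ('a \<Rightarrow> 'a \<Rightarrow> bool) \<Rightarrow> bool" where
  "pmp_graph M E \<longleftrightarrow>
     (\<forall>A f. A \<in> sets M \<and> inj_on f A \<and> (\<forall>B \<in> sets M. f -` B \<inter> A \<in> sets M) \<and>
            f ` A \<in> sets M \<and> (\<forall>x\<in>A. connected_rel E x (f x))
        \<longrightarrow> measure M (f ` A) = measure M A)"

definition ergodic_graph :: "'a measure \<Rightarrow> ('a \<Rightarrow> 'a \<Rightarrow> bool) \<Rightarrow> bool" where
  "ergodic_graph M E \<longleftrightarrow>
     (\<forall>A \<in> sets M. (\<forall>x y. x \<in> A \<and> E x y \<longrightarrow> y \<in> A) \<longrightarrow>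
        measure M A = 0 \<or> measure M A = 1)"

definition no_odd_cycles :: "('a \<Rightarrow> 'a \<Rightarrow> bool) \<Rightarrow> bool" where
  "no_odd_cycles E \<longleftrightarrow>
     \<not> (\<exists>xs. odd (length xs) \<and> length xs \<ge> 3 \<and> distinct xs \<and>
           (\<forall>i < length xs. E (xs ! i) (xs ! ((i + 1) mod length xs))))"

definition nbhd :: "('a \<Rightarrow> 'a \<Rightarrow> bool) \<Rightarrow> 'a set \<Rightarrow> 'a set" where
  "nbhd E A = {x. \<exists>y\<in>A. E x y}"

definition comp_outside :: "('a \<Rightarrow> 'a \<Rightarrow> bool) \<Rightarrow> 'a set \<Rightarrow> 'a \<Rightarrow> 'a set" where
  "comp_outside E A x = {y. (\<lambda>u v. E u v \<and> u \<notin> A \<and> v \<notin> A)\<^sup>*\<^sup>* x y}"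

definition odd_part_size :: "('a \<Rightarrow> 'a \<Rightarrow> bool) \<Rightarrow> 'a set \<Rightarrow> nat \<Rightarrow> 'a set" where
  "odd_part_size E A n =
     {x. x \<notin> A \<and> finite (comp_outside E A x) \<and> card (comp_outside E A x) = n}"

definition odd_part :: "('a \<Rightarrow> 'a \<Rightarrow> bool) \<Rightarrow> 'a set \<Rightarrow> 'a set" where
  "odd_part E A =
     {x. x \<notin> A \<and> finite (comp_outside E A x) \<and> odd (card (comp_outside E A x))}"

definition nu :: "'a measure \<Rightarrow> ('a \<Rightarrow> 'a \<Rightarrow> bool) \<Rightarrow> 'a set \<Rightarrow> 'a set \<Rightarrow> real" where
  "nu M E A Y = (\<Sum>k. measure (completion M) (Y \<inter> odd_part_size E A (2 * k + 1)) / real (2 * k + 1))"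

definition strict_tutte :: "'a measure \<Rightarrow> ('a \<Rightarrow> 'a \<Rightarrow> bool) \<Rightarrow> bool" where
  "strict_tutte M E \<longleftrightarrow>
     (\<exists>c::real. c < 1 \<and> (\<forall>A \<in> sets M. nu M E A (odd_part E A) \<le> c * measure M A))"

definition independent_set :: "('a \<Rightarrow> 'a \<Rightarrow> bool) \<Rightarrow> 'a set \<Rightarrow> bool" where
  "independent_set E A \<longleftrightarrow> (\<forall>x\<in>A. \<forall>y\<in>A. \<not> E x y)"

definition strictly_expanding_indep :: "'a measure \<Rightarrow> ('a \<Rightarrow> 'a \<Rightarrow> bool) \<Rightarrow> bool" where
  "strictly_expanding_indep M E \<longleftrightarrow>
     (\<exists>c::real. c > 1 \<and> (\<forall>A \<in> sets M. independent_set E A \<longrightarrow>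
         measure (completion M) (nbhd E A) \<ge> c * measure M A))"

end

(*
  Let A be an independent Borel set and B a Borel hull of N(A), with A removed. A vertex of A
  has all its neighbours in N(A), hence in B, so it is an isolated vertex of the graph induced
  on X - B and lies in O_B of size 1. Therefore mu(A) <= nu_B(O_B) <= c mu(B) <= c mu(N(A)),
  and 1 / max c (1/2) is an expansion constant.

  The real work is the measurability of N(A) = fst ` (E \<inter> X \<times> A) for the completion of mu.
  Borel sets are analytic, i.e. projections of closed sets C with Baire-space fibres, and such
  projections are universally measurable by a capacity argument: outer measure is continuous
  along increasing unions, so one can refine finite ball covers of the fibre scale by scale
  while keeping the outer measure above t. The closures of the resulting projections intersect
  in a closed set of measure at least t, which lies inside fst ` C because along the chosen
  branch the fibres are totally bounded.
*)

theory Submission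
  imports Defs "HOL-Probability.Discrete_Topology"
begin

section \<open>Analytic sets\<close>

text \<open>Baire space, built on the discrete copy of nat for its complete metric.\<close>

type_synonym baire = "nat \<Rightarrow> nat discrete"

definition analytic :: "'a::topological_space set \<Rightarrow> bool" where
  "analytic P \<longleftrightarrow> (\<exists>C :: ('a \<times> baire) set. closed C \<and> P = fst ` C)"

lemma closed_imp_analytic: "closed F \<Longrightarrow> analytic F"
  unfolding analytic_def by (intro exI[of _ "F \<times> UNIV"]) (auto intro: closed_Times)

lemma continuous_on_baire_coordinate:
  "continuous_on UNIV (\<lambda>p::'a::topological_space \<times> baire. snd p i)"
  using continuous_on_compose2[OF continuous_on_product_coordinates continuous_on_snd[OF continuous_on_id]]
  by auto

lemma analytic_Union:
  fixes P :: "nat \<Rightarrow> 'a::topological_space set"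
  assumes "\<And>n. analytic (P n)"
  shows "analytic (\<Union>n. P n)"
proof -
  obtain C where C: "\<And>n. closed (C n :: ('a \<times> baire) set)" "\<And>n. P n = fst ` C n"
    using assms unfolding analytic_def by metis
  \<comment> \<open>The first Baire coordinate selects the index n, the remaining ones a point of C n.\<close>
  define shift where "shift p = (fst p, snd p \<circ> Suc)" for p :: "'a \<times> baire"
  define D where "D = {p. shift p \<in> C (of_discrete (snd p 0))}"
  have "continuous_on UNIV shift"
    unfolding shift_def
    by (intro continuous_intros continuous_on_coordinatewise_then_product)
       (simp add: o_def continuous_on_baire_coordinate)
  then have "open (\<Union>n. (\<lambda>p. snd p 0) -` {discrete n} \<inter> shift -` (- C n))"
    using C(1)
    by (intro open_UN ballI open_Int open_vimage continuous_on_baire_coordinate open_discrete) auto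
  moreover have "- D = (\<Union>n. (\<lambda>p. snd p 0) -` {discrete n} \<inter> shift -` (- C n))"
  proof (intro set_eqI iffI)
    fix p assume "p \<in> - D"
    then show "p \<in> (\<Union>n. (\<lambda>p. snd p 0) -` {discrete n} \<inter> shift -` (- C n))"
      by (intro UN_I[of "of_discrete (snd p 0)"]) (auto simp: D_def of_discrete_inverse)
  qed (auto simp: D_def discrete_inverse)
  ultimately have "closed D"
    by (simp add: closed_def)
  moreover have "(\<Union>n. P n) = fst ` D"
  proof
    show "fst ` D \<subseteq> (\<Union>n. P n)"
      unfolding D_def C(2) shift_def by force
    show "(\<Union>n. P n) \<subseteq> fst ` D"
    proof
      fix x assume "x \<in> (\<Union>n. P n)"
      then obtain n \<beta> where "(x, \<beta>) \<in> C n" unfolding C(2) by auto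
      then have "(x, case_nat (discrete n) \<beta>) \<in> D"
        unfolding D_def shift_def by (simp add: o_def discrete_inverse)
      then show "x \<in> fst ` D" by force
    qed
  qed
  ultimately show ?thesis unfolding analytic_def by (intro exI[of _ D] conjI)
qed

lemma analytic_Inter:
  fixes P :: "nat \<Rightarrow> 'a::topological_space set"
  assumes "\<And>n. analytic (P n)"
  shows "analytic (\<Inter>n. P n)"
proof -
  obtain C where C: "\<And>n. closed (C n :: ('a \<times> baire) set)" "\<And>n. P n = fst ` C n"
    using assms unfolding analytic_def by metis
  \<comment> \<open>Via prod_encode one Baire sequence carries a witness in every C n at once.\<close>
  define slice where "slice n p = (fst p, \<lambda>i. snd p (prod_encode (n, i)))"
    for n and p :: "'a \<times> baire"
  define D where "D = (\<Inter>n. slice n -` C n)"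
  have "continuous_on UNIV (slice n)" for n
    unfolding slice_def
    by (intro continuous_intros continuous_on_coordinatewise_then_product)
       (simp add: continuous_on_baire_coordinate)
  then have "closed D"
    unfolding D_def using C(1) by (intro closed_INT ballI closed_vimage) auto
  moreover have "(\<Inter>n. P n) = fst ` D"
  proof (intro equalityI subsetI)
    fix x assume "x \<in> (\<Inter>n. P n)"
    then have "\<forall>n. \<exists>\<beta>. (x, \<beta>) \<in> C n" unfolding C(2) by force
    then obtain f where f: "\<And>n. (x, f n) \<in> C n" by metis
    have "(x, \<lambda>k. case_prod f (prod_decode k)) \<in> D"
      unfolding D_def slice_def using f by simp
    then show "x \<in> fst ` D" by force
  qed (force simp: D_def slice_def C(2))
  ultimately show ?thesis unfolding analytic_def by (intro exI[of _ D] conjI)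
qed

lemma open_imp_analytic:
  fixes U :: "'a::metric_space set"
  assumes "open U"
  shows "analytic U"
proof -
  have "fsigma_in euclidean U"
    using assms by (intro open_imp_fsigma_in metrizable_space_euclidean) simp
  then obtain F :: "nat \<Rightarrow> 'a set" where "\<And>n. closed (F n)" "(\<Union>n. F n) = U"
    unfolding fsigma_in_ascending closed_closedin by blast
  then show ?thesis using analytic_Union[of F] closed_imp_analytic by auto
qed

lemma borel_imp_analytic:
  fixes S :: "'a::metric_space set"
  assumes "S \<in> sets borel"
  shows "analytic S"
proof -
  have "S \<in> sigma_sets UNIV {S. open S}" using assms by (simp add: sets_borel)
  then have "analytic S \<and> analytic (- S)"
  proof (induction rule: sigma_sets.induct)
    case (Basic a)
    then show ?case by (simp add: open_imp_analytic closed_imp_analytic closed_Compl)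
  next
    case Empty
    then show ?case by (simp add: closed_imp_analytic)
  next
    case (Compl a)
    moreover have "UNIV - a = - a" by blast
    ultimately show ?case by simp
  next
    case (Union a)
    then show ?case by (simp add: analytic_Union analytic_Inter)
  qed
  then show ?thesis ..
qed

section \<open>Universal measurability of projections\<close>

lemma finite_measure_completion:
  assumes "finite_measure M"
  shows "finite_measure (completion M)"
  using assms by (intro finite_measureI) (simp add: finite_measure.emeasure_finite)

lemma sets_completionI_inner_approx:
  assumes "finite_measure M" and "P \<subseteq> space M"
    and inner: "\<And>t. t < outer_measure_of M P \<Longrightarrow>
      \<exists>K\<in>sets M. K \<subseteq> P \<and> t \<le> emeasure M K"
  shows "P \<in> sets (completion M)"
proof -
  obtain H where H: "H \<in> sets M" "P \<subseteq> H" "outer_measure_of M P = emeasure M H"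
    using outer_measure_of_attain[OF assms(2)] by blast
  define \<K> where "\<K> = {K \<in> sets M. K \<subseteq> P}"
  have "{} \<in> \<K>" unfolding \<K>_def by simp
  then obtain f :: "nat \<Rightarrow> ennreal"
    where f: "range f \<subseteq> emeasure M ` \<K>" "(SUP K\<in>\<K>. emeasure M K) = (SUP n. f n)"
    using ennreal_SUP_countable_SUP[of \<K> "emeasure M"] by blast
  then have "\<forall>n. \<exists>K. K \<in> \<K> \<and> f n = emeasure M K" by blast
  then obtain K where K: "\<And>n. K n \<in> \<K>" "\<And>n. f n = emeasure M (K n)" by metis
  define L where "L = (\<Union>n. K n)"
  have L: "L \<in> sets M" "L \<subseteq> P"
    using K(1) unfolding L_def \<K>_def by blast+
  have "outer_measure_of M P \<le> emeasure M L"
  proof (rule dense_le)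
    fix t assume "t < outer_measure_of M P"
    then obtain K' where K': "K' \<in> \<K>" "t \<le> emeasure M K'"
      using inner unfolding \<K>_def by blast
    note K'(2)
    also have "emeasure M K' \<le> (SUP K\<in>\<K>. emeasure M K)"
      using K'(1) by (rule SUP_upper)
    also have "\<dots> \<le> emeasure M L"
      unfolding f(2) K(2) L_def using K(1) unfolding \<K>_def
      by (intro SUP_least emeasure_mono) blast+
    finally show "t \<le> emeasure M L" .
  qed
  moreover have "emeasure M L \<le> emeasure M H"
    using L H by (intro emeasure_mono) auto
  ultimately have eq: "emeasure (completion M) L = emeasure (completion M) H"
    using L H by simp
  show ?thesis
  proof (rule completion.complete_sets_sandwich)
    show "L \<in> sets (completion M)" "H \<in> sets (completion M)" using L(1) H(1) by simp_all
    show "L \<subseteq> P" "P \<subseteq> H" by (fact L(2) H(2))+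
    show "emeasure (completion M) L = emeasure (completion M) H" by (fact eq)
    show "emeasure (completion M) L < \<infinity>"
      using L(1) assms(1) by (simp add: finite_measure.emeasure_finite less_top[symmetric])
  qed
qed

lemma ex_branch_outer_measure_of_gt:
  fixes P :: "nat list \<Rightarrow> 'a set"
  assumes space: "\<And>ns. P ns \<subseteq> space M"
    and split: "\<And>ns. P ns = (\<Union>n. P (ns @ [n]))"
    and mono: "\<And>ns. incseq (\<lambda>n. P (ns @ [n]))"
    and t: "t < outer_measure_of M (P [])"
  shows "\<exists>s. \<forall>k. t < outer_measure_of M (P (map s [0..<k]))"
proof -
  have step: "\<exists>n. t < outer_measure_of M (P (ns @ [n]))" if "t < outer_measure_of M (P ns)" for ns
  proof -
    have "t < (SUP n. outer_measure_of M (P (ns @ [n])))"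
      using that split[of ns] SUP_outer_measure_of_incseq[OF space mono] by metis
    then show ?thesis by (simp add: less_SUP_iff)
  qed
  have "\<exists>f. \<forall>k. (length (f k) = k \<and> t < outer_measure_of M (P (f k))) \<and>
      (\<exists>n. f (Suc k) = f k @ [n])"
  proof (rule dependent_nat_choice)
    show "\<exists>ns. length ns = 0 \<and> t < outer_measure_of M (P ns)" using t by simp
  next
    fix ns k assume "length ns = k \<and> t < outer_measure_of M (P ns)"
    with step obtain n where "t < outer_measure_of M (P (ns @ [n]))" "length ns = k" by blast
    then show "\<exists>ns'. (length ns' = Suc k \<and> t < outer_measure_of M (P ns')) \<and>
        (\<exists>n. ns' = ns @ [n])" by (intro exI[of _ "ns @ [n]"]) auto
  qed
  then obtain f where f: "\<And>k. length (f k) = k \<and> t < outer_measure_of M (P (f k))"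
    "\<And>k. \<exists>n. f (Suc k) = f k @ [n]"
    by blast
  define s where "s k = f (Suc k) ! k" for k
  have prefix: "map s [0..<k] = f k" for k
  proof (induction k)
    case 0
    then show ?case using f(1)[of 0] by simp
  next
    case (Suc k)
    then show ?case using f(1)[of k] f(2)[of k] by (auto simp: s_def nth_append)
  qed
  show ?thesis
  proof (intro exI allI)
    fix k
    have "t < outer_measure_of M (P (f k))" using f(1) by blast
    then show "t < outer_measure_of M (P (map s [0..<k]))" by (simp only: prefix)
  qed
qed

lemma compact_closure_range_decseq:
  fixes z :: "nat \<Rightarrow> 'a::complete_space"
  assumes "decseq Z" and z: "\<And>k. z k \<in> Z k"
    and bounded: "\<And>e. e > 0 \<Longrightarrow> \<exists>k F. finite F \<and> Z k \<subseteq> (\<Union>y\<in>F. ball y e)"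
  shows "compact (closure (range z))"
  unfolding compact_eq_totally_bounded
proof (intro conjI allI impI, simp add: complete_eq_closed)
  fix e :: real assume "e > 0"
  then obtain k F where F: "finite F" "Z k \<subseteq> (\<Union>y\<in>F. ball y (e / 2))"
    using bounded[of "e / 2"] by auto
  define F' where "F' = F \<union> z ` {..<k}"
  have "range z \<subseteq> (\<Union>y\<in>F'. cball y (e / 2))"
  proof clarify
    fix m
    show "z m \<in> (\<Union>y\<in>F'. cball y (e / 2))"
    proof (cases "m < k")
      case True
      then have "z m \<in> F'" unfolding F'_def by auto
      then show ?thesis using \<open>e > 0\<close> by force
    next
      case False
      then have "z m \<in> Z k" using z[of m] decseqD[OF \<open>decseq Z\<close>, of k m] by auto
      then obtain y where "y \<in> F" "z m \<in> ball y (e / 2)" using F(2) by blast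
      then show ?thesis unfolding F'_def by force
    qed
  qed
  then have "closure (range z) \<subseteq> (\<Union>y\<in>F'. cball y (e / 2))"
    using F(1) by (intro closure_minimal closed_UN) (auto simp: F'_def)
  also have "\<dots> \<subseteq> (\<Union>y\<in>F'. ball y e)"
    using \<open>e > 0\<close> by auto
  finally have "closure (range z) \<subseteq> (\<Union>y\<in>F'. ball y e)" .
  moreover have "finite F'" using F(1) by (simp add: F'_def)
  ultimately show "\<exists>F. finite F \<and> closure (range z) \<subseteq> (\<Union>y\<in>F. ball y e)" by blast
qed

lemma Inter_closure_fst_image_subset:
  fixes C :: "('a::metric_space \<times> 'b::complete_space) set" and Z :: "nat \<Rightarrow> 'b set"
  assumes "closed C" and "decseq Z"
    and bounded: "\<And>e. e > 0 \<Longrightarrow> \<exists>k F. finite F \<and> Z k \<subseteq> (\<Union>y\<in>F. ball y e)"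
  shows "(\<Inter>k. closure (fst ` (C \<inter> UNIV \<times> Z k))) \<subseteq> fst ` C"
proof
  fix x assume "x \<in> (\<Inter>k. closure (fst ` (C \<inter> UNIV \<times> Z k)))"
  then have x: "x \<in> closure (fst ` (C \<inter> UNIV \<times> Z k))" for k by blast
  have "\<exists>q\<in>C. snd q \<in> Z k \<and> dist (fst q) x < 1 / Suc k" for k
  proof -
    obtain y where "y \<in> fst ` (C \<inter> UNIV \<times> Z k)" "dist y x < 1 / Suc k"
      using x[of k] unfolding closure_approachable
      by (meson of_nat_0_less_iff zero_less_Suc divide_pos_pos zero_less_one)
    then show ?thesis by force
  qed
  then obtain Q
    where Q: "\<And>k. Q k \<in> C" "\<And>k. snd (Q k) \<in> Z k" "\<And>k. dist (fst (Q k)) x < 1 / Suc k"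
    by metis
  have "compact (closure (range (snd \<circ> Q)))"
    by (rule compact_closure_range_decseq[OF \<open>decseq Z\<close> _ bounded]) (simp add: Q(2))
  then have "seq_compact (closure (range (snd \<circ> Q)))" by (rule compact_imp_seq_compact)
  moreover have "\<forall>n. (snd \<circ> Q) n \<in> closure (range (snd \<circ> Q))"
    by (simp add: closure_subset[THEN subsetD])
  ultimately obtain l r where r: "strict_mono r" and l: "(snd \<circ> Q \<circ> r) \<longlonglongrightarrow> l"
    by (rule seq_compactE)
  have "(\<lambda>k. dist (fst (Q k)) x) \<longlonglongrightarrow> 0"
    using Q(3)
    by (intro tendsto_sandwich[OF always_eventually always_eventually tendsto_const
          LIMSEQ_inverse_real_of_nat]) (auto simp: inverse_eq_divide less_imp_le)
  then have "(fst \<circ> Q) \<longlonglongrightarrow> x"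
    unfolding o_def by (rule tendsto_dist_iff[THEN iffD2])
  then have "(fst \<circ> Q \<circ> r) \<longlonglongrightarrow> x"
    using r by (rule LIMSEQ_subseq_LIMSEQ)
  then have "(\<lambda>n. (fst (Q (r n)), snd (Q (r n)))) \<longlonglongrightarrow> (x, l)"
    using l by (intro tendsto_Pair) (simp_all add: o_def)
  then have "(\<lambda>n. Q (r n)) \<longlonglongrightarrow> (x, l)" by simp
  then have "(x, l) \<in> C"
    by (rule closed_sequentially[OF \<open>closed C\<close> Q(1)])
  then show "x \<in> fst ` C" by force
qed

lemma ex_dense_sequence:
  "\<exists>D :: nat \<Rightarrow> 'a::{metric_space, second_countable_topology}.
     \<forall>z e. 0 < e \<longrightarrow> (\<exists>i. dist z (D i) < e)"
proof -
  obtain D0 :: "'a set"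
    where D0: "countable D0" "\<And>X. open X \<Longrightarrow> X \<noteq> {} \<Longrightarrow> \<exists>d\<in>D0. d \<in> X"
    using countable_dense_exists by blast
  then have "D0 \<noteq> {}" by blast
  then have D0_range: "range (from_nat_into D0) = D0"
    using D0(1) by (rule range_from_nat_into)
  have "\<exists>i. dist z (from_nat_into D0 i) < e" if "0 < e" for z :: 'a and e :: real
  proof -
    have "ball z e \<noteq> {}" using that by simp
    then obtain d where "d \<in> D0" "d \<in> ball z e" using D0(2)[of "ball z e"] by blast
    then show ?thesis by (metis D0_range rangeE mem_ball)
  qed
  then show ?thesis by blast
qed

definition net_cell :: "(nat \<Rightarrow> 'a::metric_space) \<Rightarrow> nat list \<Rightarrow> 'a set" where
  "net_cell D ns = {z. \<forall>j<length ns. \<exists>i\<le>ns ! j. dist z (D i) \<le> (1/2::real) ^ j}"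

lemma net_cell_Nil [simp]: "net_cell D [] = UNIV"
  by (simp add: net_cell_def)

lemma net_cell_snoc:
  "net_cell D (ns @ [n]) = net_cell D ns \<inter> {z. \<exists>i\<le>n. dist z (D i) \<le> (1/2::real) ^ length ns}"
  by (auto simp: net_cell_def nth_append less_Suc_eq)

lemma net_cell_snoc_mono: "m \<le> n \<Longrightarrow> net_cell D (ns @ [m]) \<subseteq> net_cell D (ns @ [n])"
  unfolding net_cell_snoc by (auto intro: order.trans)

lemma UN_net_cell_snoc:
  assumes dense: "\<And>z e. 0 < e \<Longrightarrow> \<exists>i. dist z (D i) < e"
  shows "(\<Union>n. net_cell D (ns @ [n])) = net_cell D ns"
proof
  show "net_cell D ns \<subseteq> (\<Union>n. net_cell D (ns @ [n]))"
  proof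
    fix z assume "z \<in> net_cell D ns"
    moreover obtain i where "dist z (D i) < (1/2::real) ^ length ns" using dense by force
    ultimately have "z \<in> net_cell D (ns @ [i])" unfolding net_cell_snoc by auto
    then show "z \<in> (\<Union>n. net_cell D (ns @ [n]))" by blast
  qed
qed (auto simp: net_cell_snoc)

lemma decseq_net_cell_prefix: "decseq (\<lambda>k. net_cell D (map s [0..<k]))"
  by (rule decseq_SucI) (simp add: net_cell_snoc)

lemma net_cell_prefix_finite_cover:
  assumes "e > 0"
  shows "\<exists>k F. finite F \<and> net_cell D (map s [0..<k]) \<subseteq> (\<Union>y\<in>F. ball y e)"
proof -
  obtain j where j: "(1/2::real) ^ j < e" using real_arch_pow_inv[of e "1/2"] assms by auto
  have "net_cell D (map s [0..<Suc j]) \<subseteq> (\<Union>y\<in>D ` {..s j}. ball y e)"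
  proof
    fix z assume "z \<in> net_cell D (map s [0..<Suc j])"
    then have "\<forall>j'<Suc j. \<exists>i\<le>s j'. dist z (D i) \<le> (1/2::real) ^ j'"
      by (simp add: net_cell_def del: upt_Suc)
    then obtain i where "i \<le> s j" "dist z (D i) \<le> (1/2::real) ^ j"
      using lessI[of j] by blast
    then show "z \<in> (\<Union>y\<in>D ` {..s j}. ball y e)"
      using j by (force simp: dist_commute)
  qed
  then show ?thesis by blast
qed

lemma fst_image_closed_in_completion:
  fixes M :: "'a::metric_space measure"
    and C :: "('a \<times> 'b::{complete_space, second_countable_topology}) set"
  assumes M: "finite_measure M" "sets M = sets borel" and "closed C"
  shows "fst ` C \<in> sets (completion M)"
proof (rule sets_completionI_inner_approx[OF M(1)])
  have space: "space M = UNIV" using sets_eq_imp_space_eq[OF M(2)] by simp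
  then show "fst ` C \<subseteq> space M" by simp
  obtain D :: "nat \<Rightarrow> 'b" where dense: "\<And>z e. 0 < e \<Longrightarrow> \<exists>i. dist z (D i) < e"
    using ex_dense_sequence by blast
  define P where "P ns = fst ` (C \<inter> UNIV \<times> net_cell D ns)" for ns
  have split: "P ns = (\<Union>n. P (ns @ [n]))" for ns
  proof -
    have "P ns = fst ` (C \<inter> UNIV \<times> (\<Union>n. net_cell D (ns @ [n])))"
      by (simp only: P_def UN_net_cell_snoc[OF dense])
    also have "\<dots> = (\<Union>n. P (ns @ [n]))"
      unfolding P_def by auto
    finally show ?thesis .
  qed
  have mono: "incseq (\<lambda>n. P (ns @ [n]))" for ns
  proof (rule monoI)
    fix m n :: nat assume "m \<le> n"
    then have "net_cell D (ns @ [m]) \<subseteq> net_cell D (ns @ [n])" by (rule net_cell_snoc_mono)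
    then show "P (ns @ [m]) \<subseteq> P (ns @ [n])" unfolding P_def by blast
  qed
  have P_space: "P ns \<subseteq> space M" for ns using space by simp
  fix t assume "t < outer_measure_of M (fst ` C)"
  then have "t < outer_measure_of M (P [])" by (simp add: P_def)
  then obtain s where s: "\<And>k. t < outer_measure_of M (P (map s [0..<k]))"
    using ex_branch_outer_measure_of_gt[OF P_space split mono] by blast
  define K where "K = (\<Inter>k. closure (P (map s [0..<k])))"
  have "K \<subseteq> fst ` C"
    unfolding K_def P_def using \<open>closed C\<close> decseq_net_cell_prefix net_cell_prefix_finite_cover
    by (rule Inter_closure_fst_image_subset)
  moreover have "t \<le> emeasure M K"
  proof -
    have "t \<le> emeasure M (closure (P (map s [0..<k])))" for k
      using s[of k] outer_measure_of_mono[OF closure_subset, of M "P (map s [0..<k])"]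
      by (simp add: M(2) borel_closed)
    then have "t \<le> (INF k. emeasure M (closure (P (map s [0..<k]))))"
      by (rule INF_greatest)
    also have "\<dots> = emeasure M K"
      unfolding K_def using M
      by (intro INF_emeasure_decseq' decseq_SucI closure_mono)
         (auto simp: borel_closed finite_measure.emeasure_finite P_def net_cell_snoc)
    finally show ?thesis .
  qed
  moreover have "K \<in> sets M" unfolding K_def by (simp add: M(2) borel_closed closed_INT)
  ultimately show "\<exists>K\<in>sets M. K \<subseteq> fst ` C \<and> t \<le> emeasure M K" by blast
qed

lemma fst_image_borel_in_completion:
  fixes M :: "'a::metric_space measure" and S :: "('a \<times> 'b::polish_space) set"
  assumes M: "finite_measure M" "sets M = sets borel" and "S \<in> sets borel"
  shows "fst ` S \<in> sets (completion M)"
proof -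
  obtain C :: "(('a \<times> 'b) \<times> baire) set" where C: "closed C" "S = fst ` C"
    using borel_imp_analytic[OF assms(3)] unfolding analytic_def by blast
  define assoc :: "'a \<times> 'b \<times> baire \<Rightarrow> ('a \<times> 'b) \<times> baire"
    where "assoc p = ((fst p, fst (snd p)), snd (snd p))" for p
  have "continuous_on UNIV assoc" unfolding assoc_def by (intro continuous_intros)
  with C(1) have "closed (assoc -` C)" by (rule closed_vimage)
  moreover have "fst ` (assoc -` C) = fst ` S"
  proof
    show "fst ` (assoc -` C) \<subseteq> fst ` S"
    proof
      fix x assume "x \<in> fst ` (assoc -` C)"
      then obtain p where "assoc p \<in> C" "x = fst p" by blast
      then show "x \<in> fst ` S" unfolding C(2) assoc_def by force
    qed
    show "fst ` S \<subseteq> fst ` (assoc -` C)"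
    proof
      fix x assume "x \<in> fst ` S"
      then obtain y \<beta> where "((x, y), \<beta>) \<in> C" unfolding C(2) by force
      then have "(x, y, \<beta>) \<in> assoc -` C" by (simp add: assoc_def)
      then show "x \<in> fst ` (assoc -` C)" by force
    qed
  qed
  ultimately show ?thesis
    using fst_image_closed_in_completion[OF M] by metis
qed

lemma nbhd_in_completion:
  fixes M :: "'a::polish_space measure"
  assumes M: "finite_measure M" "sets M = sets borel"
    and E: "{p. E (fst p) (snd p)} \<in> sets (M \<Otimes>\<^sub>M M)" and A: "A \<in> sets M"
  shows "nbhd E A \<in> sets (completion M)"
proof -
  have sets_MM: "sets (M \<Otimes>\<^sub>M M) = sets (borel :: ('a \<times> 'a) measure)"
    unfolding sets_pair_measure_cong[OF M(2) M(2)] borel_prod ..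
  have "UNIV \<times> A \<in> sets (M \<Otimes>\<^sub>M M)"
    using A sets_eq_imp_space_eq[OF M(2)] by (metis pair_measureI sets.top space_borel)
  with E have "{p. E (fst p) (snd p)} \<inter> UNIV \<times> A \<in> sets borel"
    unfolding sets_MM by blast
  moreover have "nbhd E A = fst ` ({p. E (fst p) (snd p)} \<inter> UNIV \<times> A)"
    unfolding nbhd_def by force
  ultimately show ?thesis
    using fst_image_borel_in_completion[OF M] by metis
qed

section \<open>Independent sets and isolated vertices\<close>

lemma (in finite_measure) summable_measure_disjoint_family:
  assumes "disjoint_family A"
  shows "summable (\<lambda>i. measure M (A i))"
proof -
  define A' where "A' i = (if A i \<in> sets M then A i else {})" for i
  have "measure M (A i) = measure M (A' i)" for i
    by (simp add: A'_def measure_notin_sets)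
  moreover have "(\<lambda>i. measure M (A' i)) sums measure M (\<Union>i. A' i)"
    using assms by (intro finite_measure_UNION) (auto simp: A'_def disjoint_family_on_def)
  ultimately show ?thesis by (simp add: sums_summable)
qed

lemma odd_part_size_1:
  assumes "\<And>x. \<not> E x x"
  shows "odd_part_size E B 1 = - B - nbhd E (- B)"
proof (intro set_eqI iffI)
  fix x assume x: "x \<in> odd_part_size E B 1"
  have "x \<in> comp_outside E B x" by (simp add: comp_outside_def)
  moreover have "card (comp_outside E B x) = 1" using x by (simp add: odd_part_size_def)
  ultimately have "comp_outside E B x = {x}" by (metis card_1_singletonE singletonD)
  have "x \<notin> nbhd E (- B)"
  proof
    assume "x \<in> nbhd E (- B)"
    then obtain y where y: "E x y" "y \<notin> B" unfolding nbhd_def by blast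
    with x have "y \<in> comp_outside E B x"
      unfolding comp_outside_def odd_part_size_def by (simp add: r_into_rtranclp)
    with \<open>comp_outside E B x = {x}\<close> have "y = x" by blast
    with y(1) assms show False by blast
  qed
  with x show "x \<in> - B - nbhd E (- B)" unfolding odd_part_size_def by blast
next
  fix x assume x: "x \<in> - B - nbhd E (- B)"
  have "comp_outside E B x = {x}"
  proof (intro equalityI subsetI)
    fix y assume "y \<in> comp_outside E B x"
    then have "(\<lambda>u v. E u v \<and> u \<notin> B \<and> v \<notin> B)\<^sup>*\<^sup>* x y" unfolding comp_outside_def by simp
    then show "y \<in> {x}"
      by (cases rule: converse_rtranclpE) (use x in \<open>auto simp: nbhd_def\<close>)
  qed (simp add: comp_outside_def)
  with x show "x \<in> odd_part_size E B 1" unfolding odd_part_size_def by simp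
qed

lemma independent_set_subset_isolated:
  assumes "independent_set E A" and sym: "\<And>x y. E x y \<Longrightarrow> E y x" and "nbhd E A \<subseteq> S"
  shows "A \<subseteq> - (S - A) - nbhd E (- (S - A))"
proof
  fix a assume a: "a \<in> A"
  have "y \<in> S - A" if "E a y" for y
  proof -
    have "y \<in> nbhd E A" using sym[OF that] a unfolding nbhd_def by blast
    moreover have "y \<notin> A" using assms(1) a that unfolding independent_set_def by blast
    ultimately show ?thesis using assms(3) by blast
  qed
  then show "a \<in> - (S - A) - nbhd E (- (S - A))" using a unfolding nbhd_def by blast
qed

lemma measure_odd_part_size_1_le_nu:
  assumes "finite_measure M"
  shows "measure (completion M) (odd_part_size E B 1) \<le> nu M E B (odd_part E B)"
proof -
  interpret completion: finite_measure "completion M"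
    using assms by (rule finite_measure_completion)
  define O' where "O' k = odd_part E B \<inter> odd_part_size E B (2 * k + 1)" for k
  define f where "f k = measure (completion M) (O' k) / real (2 * k + 1)" for k
  have f_nonneg: "0 \<le> f k" for k unfolding f_def by simp
  have "disjoint_family O'"
    unfolding disjoint_family_on_def O'_def odd_part_size_def by auto
  then have "summable (\<lambda>k. measure (completion M) (O' k))"
    by (rule completion.summable_measure_disjoint_family)
  then have "summable f"
    by (rule summable_comparison_test[rotated]) (auto simp: f_def field_split_simps)
  then have "f 0 \<le> suminf f"
    using sum_le_suminf[of f "{..<1}"] f_nonneg by simp
  moreover have "f 0 = measure (completion M) (odd_part_size E B 1)"
    unfolding f_def O'_def odd_part_def odd_part_size_def
    by (auto intro: arg_cong2[where f = measure])
  moreover have "suminf f = nu M E B (odd_part E B)"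
    unfolding nu_def f_def O'_def by (rule refl)
  ultimately show ?thesis by simp
qed

lemma independent_set_measure_le_nu:
  fixes M :: "'a::polish_space measure"
  assumes M: "finite_measure M" "sets M = sets borel"
    and E: "borel_graph M E" and A: "A \<in> sets M" "independent_set E A"
  shows "\<exists>B\<in>sets M. measure M B \<le> measure (completion M) (nbhd E A) \<and>
    measure M A \<le> nu M E B (odd_part E B)"
proof -
  interpret completion: finite_measure "completion M"
    using M(1) by (rule finite_measure_completion)
  have space: "space M = UNIV" using sets_eq_imp_space_eq[OF M(2)] by simp
  have E_sym: "\<And>x y. E x y \<Longrightarrow> E y x" and E_irrefl: "\<And>x. \<not> E x x"
    and E_sets: "{p. E (fst p) (snd p)} \<in> sets (M \<Otimes>\<^sub>M M)"
    using E unfolding borel_graph_def by auto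
  obtain S where S: "nbhd E A \<subseteq> S" "S \<in> sets M" "S - nbhd E A \<in> null_sets (completion M)"
    "emeasure (completion M) (nbhd E A) = emeasure M S"
    by (rule completion_upper[OF nbhd_in_completion[OF M E_sets A(1)]])
  define B where "B = S - A"
  have B: "B \<in> sets M" unfolding B_def using S(2) A(1) by blast
  have "measure M B \<le> measure M S"
    unfolding B_def using M(1) S(2) A(1) by (intro finite_measure.finite_measure_mono) auto
  also have "\<dots> = measure (completion M) (nbhd E A)"
    using S(4) by (simp add: measure_def)
  finally have "measure M B \<le> measure (completion M) (nbhd E A)" .
  moreover have "measure M A \<le> nu M E B (odd_part E B)"
  proof -
    have "- B = space M - B" using space by blast
    then have "- B \<in> sets M" using B by simp
    then have isolated_sets: "odd_part_size E B 1 \<in> sets (completion M)"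
      unfolding odd_part_size_1[OF E_irrefl]
      using nbhd_in_completion[OF M E_sets] by blast
    have "A \<subseteq> - B - nbhd E (- B)"
      unfolding B_def using A(2) E_sym S(1) by (rule independent_set_subset_isolated)
    have "measure M A = measure (completion M) A" using A(1) by simp
    also have "\<dots> \<le> measure (completion M) (odd_part_size E B 1)"
      using isolated_sets \<open>A \<subseteq> - B - nbhd E (- B)\<close> unfolding odd_part_size_1[OF E_irrefl]
      by (rule completion.finite_measure_mono[rotated])
    also have "\<dots> \<le> nu M E B (odd_part E B)"
      using M(1) by (rule measure_odd_part_size_1_le_nu)
    finally show ?thesis .
  qed
  ultimately show ?thesis using B by blast
qed

theorem lemma7p7:
  fixes M :: "'a::polish_space measure" and E :: "'a \<Rightarrow> 'a \<Rightarrow> bool" and d :: nat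
  assumes "prob_space M" and "sets M = sets borel"
    and "borel_graph M E" and "d_regular M E d"
    and "pmp_graph M E" and "ergodic_graph M E"
    and "no_odd_cycles E"
    and "strict_tutte M E"
  shows "strictly_expanding_indep M E"
proof -
  have M: "finite_measure M" "sets M = sets borel"
    using assms(1,2) by (simp_all add: prob_space_def)
  obtain c where c: "c < 1"
    "\<And>A. A \<in> sets M \<Longrightarrow> nu M E A (odd_part E A) \<le> c * measure M A"
    using assms(8) unfolding strict_tutte_def by blast
  \<comment> \<open>c itself may be nonpositive, so 1 / c is not always an expansion constant.\<close>
  define c' where "c' = max c (1 / 2)"
  have c': "0 < c'" "c' < 1" "c \<le> c'" using c(1) by (auto simp: c'_def)
  have bound: "measure M A \<le> c' * measure (completion M) (nbhd E A)"
    if A: "A \<in> sets M" "independent_set E A" for A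
  proof -
    obtain B where B: "B \<in> sets M" "measure M B \<le> measure (completion M) (nbhd E A)"
      "measure M A \<le> nu M E B (odd_part E B)"
      using independent_set_measure_le_nu[OF M assms(3) A] by blast
    have "measure M A \<le> c * measure M B" using B(3) c(2)[OF B(1)] by linarith
    also have "\<dots> \<le> c' * measure M B" using c'(3) by (simp add: mult_right_mono)
    also have "\<dots> \<le> c' * measure (completion M) (nbhd E A)" using B(2) c'(1) by simp
    finally show ?thesis .
  qed
  show ?thesis
    unfolding strictly_expanding_indep_def
    using c'(1,2) bound by (intro exI[of _ "1 / c'"]) (auto simp: field_simps)
qed

end
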